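(* Let $(\Omega,\mu)$ be a $\sigma$-finite measure space and $E=L^2(\Omega,\mu)$. Let $A: E\supseteq D(A)\to E$ be a self-adjoint real operator with spectral bound $s(A)<\infty$ which is associated with a symmetric (closed) form $a: D(a)\times D(a)\to\mathbb{C}$ with form domain $D(a)\subseteq E$. If $0\le u\in E$ is strictly positive almost everywhere and $D(a)\subseteq E_u$, then $-u\otimes u\preceq R(\mu,A)\preceq u\otimes u$ for every real $\mu\in\rho(A)$.
   Context: A real operator maps real functions in its domain to real functions, with domain spanned by its real elements. $s(A)=\sup\{\operatorname{Re}\lambda:\lambda\in\sigma(A)\}$. $E_u=\{f\in E: |f|\le cu \text{ a.e. for some } c\ge0\}$. $u\otimes u$ is the operator $f\mapsto\big(\int_\Omega uf\,d\mu\big)u$. $R(\mu,A)=(\mu-A)^{-1}$. For bounded real operators, $T\succeq S$ (equivalently $S\preceq T$) means $T-cS$ maps nonnegative functions to nonnegative functions for some $c>0$. *)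

theory Defs
  imports "HOL-Analysis.Analysis"
begin

text \<open>Concrete model of the complex Hilbert space E = L^2(Omega, mu): square integrable
  measurable complex functions, with all identities understood almost everywhere.\<close>

definition L2 :: "'a measure \<Rightarrow> ('a \<Rightarrow> complex) set" where
  "L2 M = {f. f \<in> borel_measurable M \<and> integrable M (\<lambda>x. (cmod (f x))^2)}"

definition l2_inner :: "'a measure \<Rightarrow> ('a \<Rightarrow> complex) \<Rightarrow> ('a \<Rightarrow> complex) \<Rightarrow> complex" where
  "l2_inner M f g = (LINT x|M. f x * cnj (g x))"

definition l2_norm :: "'a measure \<Rightarrow> ('a \<Rightarrow> complex) \<Rightarrow> real" where
  "l2_norm M f = sqrt (LINT x|M. (cmod (f x))^2)"

definition ae_eq :: "'a measure \<Rightarrow> ('a \<Rightarrow> complex) \<Rightarrow> ('a \<Rightarrow> complex) \<Rightarrow> bool" where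
  "ae_eq M f g \<longleftrightarrow> (AE x in M. f x = g x)"

definition real_fun :: "'a measure \<Rightarrow> ('a \<Rightarrow> complex) \<Rightarrow> bool" where
  "real_fun M f \<longleftrightarrow> (AE x in M. Im (f x) = 0)"

definition nonneg_fun :: "'a measure \<Rightarrow> ('a \<Rightarrow> complex) \<Rightarrow> bool" where
  "nonneg_fun M f \<longleftrightarrow> (AE x in M. Im (f x) = 0 \<and> 0 \<le> Re (f x))"

definition linear_subspace_L2 :: "'a measure \<Rightarrow> ('a \<Rightarrow> complex) set \<Rightarrow> bool" where
  "linear_subspace_L2 M D \<longleftrightarrow> D \<subseteq> L2 M \<and> (\<lambda>x. 0) \<in> D \<and>
     (\<forall>f\<in>D. \<forall>g\<in>D. (\<lambda>x. f x + g x) \<in> D) \<and> (\<forall>c. \<forall>f\<in>D. (\<lambda>x. c * f x) \<in> D)"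

definition linear_operator :: "'a measure \<Rightarrow> ('a \<Rightarrow> complex) set \<Rightarrow> (('a \<Rightarrow> complex) \<Rightarrow> ('a \<Rightarrow> complex)) \<Rightarrow> bool" where
  "linear_operator M D A \<longleftrightarrow> linear_subspace_L2 M D \<and> (\<forall>f\<in>D. A f \<in> L2 M) \<and>
     (\<forall>f\<in>D. \<forall>g\<in>D. ae_eq M f g \<longrightarrow> ae_eq M (A f) (A g)) \<and>
     (\<forall>f\<in>D. \<forall>g\<in>D. ae_eq M (A (\<lambda>x. f x + g x)) (\<lambda>x. A f x + A g x)) \<and>
     (\<forall>c. \<forall>f\<in>D. ae_eq M (A (\<lambda>x. c * f x)) (\<lambda>x. c * A f x))"

definition dense_L2 :: "'a measure \<Rightarrow> ('a \<Rightarrow> complex) set \<Rightarrow> bool" where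
  "dense_L2 M D \<longleftrightarrow> (\<forall>f\<in>L2 M. \<forall>e>0. \<exists>g\<in>D. l2_norm M (\<lambda>x. f x - g x) < e)"

text \<open>Self-adjoint: densely defined and A equals its adjoint A* (graphs agree modulo a.e.).\<close>
definition self_adjoint :: "'a measure \<Rightarrow> ('a \<Rightarrow> complex) set \<Rightarrow> (('a \<Rightarrow> complex) \<Rightarrow> ('a \<Rightarrow> complex)) \<Rightarrow> bool" where
  "self_adjoint M D A \<longleftrightarrow> linear_operator M D A \<and> dense_L2 M D \<and>
     (\<forall>g\<in>L2 M. \<forall>h\<in>L2 M. (\<forall>f\<in>D. l2_inner M (A f) g = l2_inner M f h) \<longleftrightarrow>
        (\<exists>g'\<in>D. ae_eq M g' g \<and> ae_eq M (A g') h))"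

definition real_operator :: "'a measure \<Rightarrow> ('a \<Rightarrow> complex) set \<Rightarrow> (('a \<Rightarrow> complex) \<Rightarrow> ('a \<Rightarrow> complex)) \<Rightarrow> bool" where
  "real_operator M D A \<longleftrightarrow> (\<forall>f\<in>D. real_fun M f \<longrightarrow> real_fun M (A f)) \<and>
     (\<forall>f\<in>D. \<exists>g\<in>D. \<exists>h\<in>D. real_fun M g \<and> real_fun M h \<and> ae_eq M f (\<lambda>x. g x + \<i> * h x))"

definition resolvent_set :: "'a measure \<Rightarrow> ('a \<Rightarrow> complex) set \<Rightarrow> (('a \<Rightarrow> complex) \<Rightarrow> ('a \<Rightarrow> complex)) \<Rightarrow> complex set" where
  "resolvent_set M D A = {l. (\<forall>g\<in>L2 M. \<exists>f\<in>D. ae_eq M (\<lambda>x. l * f x - A f x) g) \<and>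
     (\<exists>C. \<forall>f\<in>D. l2_norm M f \<le> C * l2_norm M (\<lambda>x. l * f x - A f x))}"

definition spectrum_op :: "'a measure \<Rightarrow> ('a \<Rightarrow> complex) set \<Rightarrow> (('a \<Rightarrow> complex) \<Rightarrow> ('a \<Rightarrow> complex)) \<Rightarrow> complex set" where
  "spectrum_op M D A = - resolvent_set M D A"

text \<open>Spectral bound s(A) = sup Re sigma(A) in the extended reals (sup of the empty set is -infinity).\<close>
definition spectral_bound :: "'a measure \<Rightarrow> ('a \<Rightarrow> complex) set \<Rightarrow> (('a \<Rightarrow> complex) \<Rightarrow> ('a \<Rightarrow> complex)) \<Rightarrow> ereal" where
  "spectral_bound M D A = (SUP z\<in>spectrum_op M D A. ereal (Re z))"

definition resolvent :: "'a measure \<Rightarrow> ('a \<Rightarrow> complex) set \<Rightarrow> (('a \<Rightarrow> complex) \<Rightarrow> ('a \<Rightarrow> complex)) \<Rightarrow> complex \<Rightarrow> ('a \<Rightarrow> complex) \<Rightarrow> ('a \<Rightarrow> complex)" where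
  "resolvent M D A l f = (SOME g. g \<in> D \<and> ae_eq M (\<lambda>x. l * g x - A g x) f)"

definition sym_form :: "'a measure \<Rightarrow> ('a \<Rightarrow> complex) set \<Rightarrow> (('a \<Rightarrow> complex) \<Rightarrow> ('a \<Rightarrow> complex) \<Rightarrow> complex) \<Rightarrow> bool" where
  "sym_form M Da a \<longleftrightarrow> linear_subspace_L2 M Da \<and>
     (\<forall>f\<in>Da. \<forall>g\<in>Da. \<forall>h\<in>Da. a (\<lambda>x. f x + g x) h = a f h + a g h) \<and>
     (\<forall>c. \<forall>f\<in>Da. \<forall>h\<in>Da. a (\<lambda>x. c * f x) h = c * a f h) \<and>
     (\<forall>f\<in>Da. \<forall>h\<in>Da. a f h = cnj (a h f)) \<and>
     (\<forall>f\<in>Da. \<forall>g\<in>Da. \<forall>h\<in>Da. ae_eq M f g \<longrightarrow> a f h = a g h)"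

definition form_norm :: "'a measure \<Rightarrow> (('a \<Rightarrow> complex) \<Rightarrow> ('a \<Rightarrow> complex) \<Rightarrow> complex) \<Rightarrow> real \<Rightarrow> ('a \<Rightarrow> complex) \<Rightarrow> real" where
  "form_norm M a w f = sqrt (Re (a f f) + (w + 1) * (l2_norm M f)^2)"

definition closed_form :: "'a measure \<Rightarrow> ('a \<Rightarrow> complex) set \<Rightarrow> (('a \<Rightarrow> complex) \<Rightarrow> ('a \<Rightarrow> complex) \<Rightarrow> complex) \<Rightarrow> bool" where
  "closed_form M Da a \<longleftrightarrow> sym_form M Da a \<and>
     (\<exists>w. (\<forall>f\<in>Da. - w * (l2_norm M f)^2 \<le> Re (a f f)) \<and>
       (\<forall>F. (\<forall>n. F n \<in> Da) \<and> (\<forall>e>0. \<exists>N. \<forall>m\<ge>N. \<forall>n\<ge>N. form_norm M a w (\<lambda>x. F m x - F n x) < e)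
          \<longrightarrow> (\<exists>f\<in>Da. (\<lambda>n. form_norm M a w (\<lambda>x. F n x - f x)) \<longlonglongrightarrow> 0)))"

definition associated :: "'a measure \<Rightarrow> ('a \<Rightarrow> complex) set \<Rightarrow> (('a \<Rightarrow> complex) \<Rightarrow> ('a \<Rightarrow> complex)) \<Rightarrow>
    ('a \<Rightarrow> complex) set \<Rightarrow> (('a \<Rightarrow> complex) \<Rightarrow> ('a \<Rightarrow> complex) \<Rightarrow> complex) \<Rightarrow> bool" where
  "associated M D A Da a \<longleftrightarrow> (\<forall>f\<in>L2 M. \<forall>g\<in>L2 M.
     (\<exists>f'\<in>D. ae_eq M f' f \<and> ae_eq M (A f') g) \<longleftrightarrow>
     (\<exists>f'\<in>Da. ae_eq M f' f \<and> (\<forall>h\<in>Da. a f' h = - l2_inner M g h)))"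

definition principal_ideal :: "'a measure \<Rightarrow> ('a \<Rightarrow> real) \<Rightarrow> ('a \<Rightarrow> complex) set" where
  "principal_ideal M u = {f \<in> L2 M. \<exists>c\<ge>0. AE x in M. cmod (f x) \<le> c * u x}"

definition rank_one :: "'a measure \<Rightarrow> ('a \<Rightarrow> real) \<Rightarrow> ('a \<Rightarrow> complex) \<Rightarrow> ('a \<Rightarrow> complex)" where
  "rank_one M u f = (\<lambda>x. (LINT y|M. complex_of_real (u y) * f y) * complex_of_real (u x))"

definition op_dom_le :: "'a measure \<Rightarrow> (('a \<Rightarrow> complex) \<Rightarrow> ('a \<Rightarrow> complex)) \<Rightarrow> (('a \<Rightarrow> complex) \<Rightarrow> ('a \<Rightarrow> complex)) \<Rightarrow> bool" where
  "op_dom_le M S T \<longleftrightarrow> (\<exists>c>0. \<forall>f\<in>L2 M. nonneg_fun M f \<longrightarrow> nonneg_fun M (\<lambda>x. T f x - c * S f x))"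

end

theory Submission
  imports Defs
begin

text \<open>Since the form domain \<open>D(a)\<close> is complete for the form norm \<open>\<parallel>\<cdot>\<parallel>\<^sub>a\<close> and is
  covered by the closed sets \<open>{f. |f| \<le> n u}\<close>, Baire's theorem yields
  \<open>|f| \<le> K \<parallel>f\<parallel>\<^sub>a u\<close> on \<open>D(a)\<close>. The resolvent \<open>R = R(\<mu>, A)\<close> maps \<open>L\<^sup>2\<close> boundedly into
  \<open>D(a)\<close> and is symmetric, so with \<open>w(g) = \<integral> u |g|\<close> we get
  \<open>\<parallel>R g\<parallel>\<^sup>2 = \<langle>g, R (R g)\<rangle> \<le> K \<parallel>R (R g)\<parallel>\<^sub>a w(g) \<le> C \<parallel>R g\<parallel> w(g)\<close>, i.e. \<open>\<parallel>R g\<parallel> \<le> C w(g)\<close>.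
  Inserting this into \<open>\<parallel>R g\<parallel>\<^sub>a\<^sup>2 \<le> |\<langle>g, R g\<rangle>| + c \<parallel>R g\<parallel>\<^sup>2\<close> bounds \<open>\<parallel>R g\<parallel>\<^sub>a\<close> by a
  multiple of \<open>w(g)\<close>, hence \<open>|R g| \<le> K' w(g) u\<close>; for \<open>g \<ge> 0\<close> the right-hand side is
  \<open>K' (u \<otimes> u) g\<close>, and \<open>R\<close> maps real functions to real functions.\<close>

section \<open>Square-integrable functions\<close>

lemma borel_measurable_cnj [measurable]:
  "f \<in> borel_measurable M \<Longrightarrow> (\<lambda>x. cnj (f x)) \<in> borel_measurable M"
  by (rule borel_measurable_continuous_on[of cnj]) (intro continuous_intros)

lemma L2_measurable [measurable_dest]: "f \<in> L2 M \<Longrightarrow> f \<in> borel_measurable M"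
  by (simp add: L2_def)

lemma L2_integrable_square: "f \<in> L2 M \<Longrightarrow> integrable M (\<lambda>x. (cmod (f x))\<^sup>2)"
  by (simp add: L2_def)

lemma L2I: "f \<in> borel_measurable M \<Longrightarrow> integrable M (\<lambda>x. (cmod (f x))\<^sup>2) \<Longrightarrow> f \<in> L2 M"
  by (simp add: L2_def)

lemma integrable_norm_mult_L2:
  assumes "f \<in> L2 M" "g \<in> L2 M"
  shows "integrable M (\<lambda>x. cmod (f x) * cmod (g x))"
proof (rule Bochner_Integration.integrable_bound)
  show "integrable M (\<lambda>x. (cmod (f x))\<^sup>2 + (cmod (g x))\<^sup>2)"
    using assms by (intro Bochner_Integration.integrable_add L2_integrable_square)
  show "AE x in M. norm (cmod (f x) * cmod (g x)) \<le> norm ((cmod (f x))\<^sup>2 + (cmod (g x))\<^sup>2)"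
  proof (rule AE_I2)
    fix x
    have "2 * cmod (f x) * cmod (g x) \<le> (cmod (f x))\<^sup>2 + (cmod (g x))\<^sup>2"
      by (rule sum_squares_bound)
    then have "cmod (f x) * cmod (g x) \<le> (cmod (f x))\<^sup>2 + (cmod (g x))\<^sup>2"
      using mult_nonneg_nonneg[OF norm_ge_zero norm_ge_zero, of "f x" "g x"] by linarith
    then show "norm (cmod (f x) * cmod (g x)) \<le> norm ((cmod (f x))\<^sup>2 + (cmod (g x))\<^sup>2)"
      by simp
  qed
qed (use assms in measurable)

lemma integrable_mult_cnj_L2:
  assumes "f \<in> L2 M" "g \<in> L2 M"
  shows "integrable M (\<lambda>x. f x * cnj (g x))"
  by (rule Bochner_Integration.integrable_bound[OF integrable_norm_mult_L2[OF assms]])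
    (use assms in \<open>simp_all add: norm_mult\<close>)

lemma L2_add:
  assumes "f \<in> L2 M" "g \<in> L2 M"
  shows "(\<lambda>x. f x + g x) \<in> L2 M"
proof (rule L2I)
  show "integrable M (\<lambda>x. (cmod (f x + g x))\<^sup>2)"
  proof (rule Bochner_Integration.integrable_bound)
    show "integrable M (\<lambda>x. 2 * (cmod (f x))\<^sup>2 + 2 * (cmod (g x))\<^sup>2)"
      using assms by (intro Bochner_Integration.integrable_add integrable_mult_right L2_integrable_square)
    have "(cmod (f x + g x))\<^sup>2 \<le> 2 * (cmod (f x))\<^sup>2 + 2 * (cmod (g x))\<^sup>2" for x
    proof -
      have "(cmod (f x + g x))\<^sup>2 \<le> (cmod (f x) + cmod (g x))\<^sup>2"
        by (simp add: norm_triangle_ineq power_mono)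
      also have "\<dots> \<le> 2 * (cmod (f x))\<^sup>2 + 2 * (cmod (g x))\<^sup>2"
        using sum_squares_bound[of "cmod (f x)" "cmod (g x)"] by (simp add: power2_sum)
      finally show ?thesis .
    qed
    then show "AE x in M. norm ((cmod (f x + g x))\<^sup>2) \<le> norm (2 * (cmod (f x))\<^sup>2 + 2 * (cmod (g x))\<^sup>2)"
      by simp
  qed (use assms in measurable)
qed (use assms in measurable)

lemma L2_mult:
  assumes "f \<in> L2 M"
  shows "(\<lambda>x. c * f x) \<in> L2 M"
proof (rule L2I)
  have "integrable M (\<lambda>x. (cmod c)\<^sup>2 * (cmod (f x))\<^sup>2)"
    using assms by (intro integrable_mult_right L2_integrable_square)
  then show "integrable M (\<lambda>x. (cmod (c * f x))\<^sup>2)"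
    by (simp add: norm_mult power_mult_distrib)
qed (use assms in measurable)

lemma L2_diff:
  assumes "f \<in> L2 M" "g \<in> L2 M"
  shows "(\<lambda>x. f x - g x) \<in> L2 M"
  using L2_add[OF assms(1) L2_mult[OF assms(2), of "-1"]] by simp

lemma l2_inner_add_left:
  assumes "f \<in> L2 M" "g \<in> L2 M" "h \<in> L2 M"
  shows "l2_inner M (\<lambda>x. f x + g x) h = l2_inner M f h + l2_inner M g h"
  using integrable_mult_cnj_L2[OF assms(1,3)] integrable_mult_cnj_L2[OF assms(2,3)]
  by (simp add: l2_inner_def distrib_right)

lemma l2_inner_mult_left: "l2_inner M (\<lambda>x. c * f x) h = c * l2_inner M f h"
  by (simp add: l2_inner_def mult.assoc)

lemma l2_inner_commute: "l2_inner M g f = cnj (l2_inner M f g)"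
proof -
  have "cnj (l2_inner M f g) = (LINT x|M. cnj (f x * cnj (g x)))"
    unfolding l2_inner_def by (rule Bochner_Integration.integral_cnj[symmetric])
  then show ?thesis
    by (simp add: l2_inner_def mult.commute)
qed

lemma l2_norm_nonneg: "0 \<le> l2_norm M f"
  by (simp add: l2_norm_def)

lemma l2_norm_square: "(l2_norm M f)\<^sup>2 = (LINT x|M. (cmod (f x))\<^sup>2)"
  by (simp add: l2_norm_def)

lemma l2_inner_self: "l2_inner M f f = complex_of_real ((l2_norm M f)\<^sup>2)"
  by (simp add: l2_inner_def l2_norm_square complex_norm_square[symmetric]
      flip: integral_complex_of_real)

lemma ae_eq_refl: "ae_eq M f f"
  by (simp add: ae_eq_def)

lemma ae_eq_sym: "ae_eq M f g \<Longrightarrow> ae_eq M g f"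
  unfolding ae_eq_def by (auto elim: eventually_mono)

lemma ae_eq_trans: "ae_eq M f g \<Longrightarrow> ae_eq M g h \<Longrightarrow> ae_eq M f h"
  unfolding ae_eq_def by (auto elim: eventually_elim2)

lemma l2_norm_ae_cong:
  assumes "f \<in> L2 M" "g \<in> L2 M" "ae_eq M f g"
  shows "l2_norm M f = l2_norm M g"
proof -
  have "(LINT x|M. (cmod (f x))\<^sup>2) = (LINT x|M. (cmod (g x))\<^sup>2)"
    using assms unfolding ae_eq_def by (intro integral_cong_AE) (auto elim: eventually_mono)
  then show ?thesis
    by (simp add: l2_norm_def)
qed

lemma l2_inner_ae_cong:
  assumes "f \<in> L2 M" "f' \<in> L2 M" "g \<in> L2 M" "g' \<in> L2 M" "ae_eq M f f'" "ae_eq M g g'"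
  shows "l2_inner M f g = l2_inner M f' g'"
  unfolding l2_inner_def using assms unfolding ae_eq_def
  by (intro integral_cong_AE) (auto elim: eventually_elim2)

lemma AE_eq_0_iff_l2_norm_eq_0:
  assumes "f \<in> L2 M"
  shows "(AE x in M. f x = 0) \<longleftrightarrow> l2_norm M f = 0"
  using integral_nonneg_eq_0_iff_AE[OF L2_integrable_square[OF assms]]
  by (simp add: l2_norm_def)

lemma norm_l2_inner_le:
  assumes "f \<in> L2 M" "g \<in> L2 M"
  shows "cmod (l2_inner M f g) \<le> (LINT x|M. cmod (f x) * cmod (g x))"
  unfolding l2_inner_def using integral_norm_bound[of M "\<lambda>x. f x * cnj (g x)"]
  by (simp add: norm_mult)
lemma linear_subspace_L2D:
  assumes "linear_subspace_L2 M V"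
  shows linear_subspace_L2_subset: "V \<subseteq> L2 M"
    and linear_subspace_L2_zero: "(\<lambda>x. 0) \<in> V"
    and linear_subspace_L2_add: "f \<in> V \<Longrightarrow> g \<in> V \<Longrightarrow> (\<lambda>x. f x + g x) \<in> V"
    and linear_subspace_L2_mult: "f \<in> V \<Longrightarrow> (\<lambda>x. c * f x) \<in> V"
  using assms by (auto simp: linear_subspace_L2_def)

lemma linear_subspace_L2_lincomb:
  "linear_subspace_L2 M V \<Longrightarrow> f \<in> V \<Longrightarrow> g \<in> V \<Longrightarrow> (\<lambda>x. f x + c * g x) \<in> V"
  by (simp add: linear_subspace_L2_add linear_subspace_L2_mult)

lemma linear_subspace_L2_diff:
  "linear_subspace_L2 M V \<Longrightarrow> f \<in> V \<Longrightarrow> g \<in> V \<Longrightarrow> (\<lambda>x. f x - g x) \<in> V"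
  using linear_subspace_L2_lincomb[of M V f g "-1"] by simp

lemma L2_tendsto_AE_subseq:
  assumes F: "\<And>n. F n \<in> L2 M" and f: "f \<in> L2 M"
    and lim: "(\<lambda>n. l2_norm M (\<lambda>x. F n x - f x)) \<longlonglongrightarrow> 0"
  shows "\<exists>r. strict_mono r \<and> (AE x in M. (\<lambda>n. F (r n) x) \<longlonglongrightarrow> f x)"
proof -
  have "(\<lambda>n. (l2_norm M (\<lambda>x. F n x - f x))\<^sup>2) \<longlonglongrightarrow> 0"
    using tendsto_power[OF lim, of 2] by simp
  then have "(\<lambda>n. LINT x|M. norm ((cmod (F n x - f x))\<^sup>2)) \<longlonglongrightarrow> 0"
    by (simp add: l2_norm_square)
  then obtain r where r: "strict_mono r" "AE x in M. (\<lambda>n. (cmod (F (r n) x - f x))\<^sup>2) \<longlonglongrightarrow> 0"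
    using tendsto_L1_AE_subseq[of M "\<lambda>n x. (cmod (F n x - f x))\<^sup>2"]
      L2_integrable_square[OF L2_diff[OF F f]] by blast
  from r(2) have "AE x in M. (\<lambda>n. F (r n) x) \<longlonglongrightarrow> f x"
  proof eventually_elim
    case (elim x)
    then have "(\<lambda>n. cmod (F (r n) x - f x)) \<longlonglongrightarrow> 0"
      using tendsto_real_sqrt[OF elim] by simp
    then show ?case
      by (simp add: LIM_zero_cancel tendsto_norm_zero_iff)
  qed
  with r(1) show ?thesis by blast
qed

section \<open>Positive Hermitian forms\<close>

lemma nonneg_quadratic_imp_le_mult:
  fixes P Q c :: real
  assumes nonneg: "\<And>r. 0 \<le> P - 2 * r * c + r\<^sup>2 * c * Q" and "0 \<le> c" "0 \<le> Q"
  shows "c \<le> P * Q"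
proof (cases "Q = 0")
  case True
  show ?thesis
  proof (rule ccontr)
    assume "\<not> c \<le> P * Q"
    with True \<open>0 \<le> c\<close> have "c > 0" by simp
    have "0 \<le> P - 2 * ((P + 1) / (2 * c)) * c"
      using nonneg[of "(P + 1) / (2 * c)"] True by simp
    also have "2 * ((P + 1) / (2 * c)) * c = P + 1"
      using \<open>c > 0\<close> by (simp add: field_simps)
    finally show False by simp
  qed
next
  case False
  with \<open>0 \<le> Q\<close> have "Q > 0" by simp
  have "0 \<le> P - 2 * (1 / Q) * c + (1 / Q)\<^sup>2 * c * Q"
    by (rule nonneg)
  also have "\<dots> = P - c / Q"
    using \<open>Q > 0\<close> by (simp add: power2_eq_square field_simps)
  finally show ?thesis
    using \<open>Q > 0\<close> by (simp add: field_simps mult.commute)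
qed

lemma square_le_affine_imp_le:
  fixes x \<alpha> \<beta> :: real
  assumes "0 \<le> x" "0 \<le> \<alpha>" "0 \<le> \<beta>" "x\<^sup>2 \<le> \<alpha> * x + \<beta>\<^sup>2"
  shows "x \<le> \<alpha> + \<beta>"
proof (rule ccontr)
  assume "\<not> x \<le> \<alpha> + \<beta>"
  then have "\<alpha> + \<beta> < x" by simp
  then have "\<alpha> * x + \<beta>\<^sup>2 \<le> (\<alpha> + \<beta>) * x"
    using assms by (simp add: power2_eq_square algebra_simps mult_left_mono)
  also have "\<dots> < x * x"
    using \<open>\<alpha> + \<beta> < x\<close> assms by (simp add: mult_strict_right_mono)
  finally show False
    using assms(4) by (simp add: power2_eq_square)
qed

locale positive_hermitian_form =
  fixes V :: "('a \<Rightarrow> complex) set"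
    and B :: "('a \<Rightarrow> complex) \<Rightarrow> ('a \<Rightarrow> complex) \<Rightarrow> complex"
  assumes lincomb_closed: "f \<in> V \<Longrightarrow> g \<in> V \<Longrightarrow> (\<lambda>x. f x + c * g x) \<in> V"
    and add_left: "f \<in> V \<Longrightarrow> g \<in> V \<Longrightarrow> h \<in> V \<Longrightarrow> B (\<lambda>x. f x + g x) h = B f h + B g h"
    and mult_left: "f \<in> V \<Longrightarrow> h \<in> V \<Longrightarrow> B (\<lambda>x. c * f x) h = c * B f h"
    and hermitian: "f \<in> V \<Longrightarrow> h \<in> V \<Longrightarrow> B f h = cnj (B h f)"
    and nonneg: "f \<in> V \<Longrightarrow> 0 \<le> Re (B f f)"
begin

definition seminorm :: "('a \<Rightarrow> complex) \<Rightarrow> real"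
  where "seminorm f = sqrt (Re (B f f))"

lemma mult_closed:
  assumes "f \<in> V"
  shows "(\<lambda>x. c * f x) \<in> V"
  using lincomb_closed[OF assms assms, of "c - 1"] by (simp add: algebra_simps)

lemma lincomb_left:
  assumes "f \<in> V" "g \<in> V" "h \<in> V"
  shows "B (\<lambda>x. f x + c * g x) h = B f h + c * B g h"
  using add_left[OF assms(1) mult_closed[OF assms(2)] assms(3)] mult_left[OF assms(2,3)] by simp

lemma lincomb_right:
  assumes "f \<in> V" "g \<in> V" "h \<in> V"
  shows "B h (\<lambda>x. f x + c * g x) = B h f + cnj c * B h g"
proof -
  have "B h (\<lambda>x. f x + c * g x) = cnj (B (\<lambda>x. f x + c * g x) h)"
    using assms by (intro hermitian lincomb_closed)
  also have "\<dots> = cnj (B f h) + cnj c * cnj (B g h)"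
    using lincomb_left[OF assms] by simp
  also have "\<dots> = B h f + cnj c * B h g"
    using hermitian[OF assms(3,1)] hermitian[OF assms(3,2)] by simp
  finally show ?thesis .
qed

lemma Re_self_lincomb:
  assumes "f \<in> V" "g \<in> V"
  shows "Re (B (\<lambda>x. f x + c * g x) (\<lambda>x. f x + c * g x))
    = Re (B f f) + 2 * Re (cnj c * B f g) + (cmod c)\<^sup>2 * Re (B g g)"
proof -
  have "B (\<lambda>x. f x + c * g x) (\<lambda>x. f x + c * g x)
      = B f f + cnj c * B f g + c * (B g f + cnj c * B g g)"
    using assms lincomb_closed by (simp add: lincomb_left lincomb_right)
  also have "B g f = cnj (B f g)"
    using hermitian[OF assms(2,1)] .
  finally have "B (\<lambda>x. f x + c * g x) (\<lambda>x. f x + c * g x)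
      = B f f + (cnj c * B f g + cnj (cnj c * B f g)) + (c * cnj c) * B g g"
    by (simp add: algebra_simps)
  then show ?thesis
    by (simp only: complex_norm_square[symmetric]) simp
qed

lemma Cauchy_Schwarz:
  assumes "f \<in> V" "g \<in> V"
  shows "(cmod (B f g))\<^sup>2 \<le> Re (B f f) * Re (B g g)"
proof (rule nonneg_quadratic_imp_le_mult)
  fix r :: real
  define c where "c = - (complex_of_real r * B f g)"
  have "cnj c * B f g = - (complex_of_real r * (B f g * cnj (B f g)))"
    by (simp add: c_def mult_ac)
  then have "Re (cnj c * B f g) = - r * (cmod (B f g))\<^sup>2"
    by (simp only: complex_norm_square[symmetric]) simp
  moreover have "(cmod c)\<^sup>2 = r\<^sup>2 * (cmod (B f g))\<^sup>2"
    by (simp add: c_def norm_mult power_mult_distrib)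
  moreover have "0 \<le> Re (B (\<lambda>x. f x + c * g x) (\<lambda>x. f x + c * g x))"
    using assms by (intro nonneg lincomb_closed)
  ultimately show "0 \<le> Re (B f f) - 2 * r * (cmod (B f g))\<^sup>2 + r\<^sup>2 * (cmod (B f g))\<^sup>2 * Re (B g g)"
    using Re_self_lincomb[OF assms, of c] by (simp add: mult_ac)
qed (use assms nonneg in auto)

lemma seminorm_nonneg: "f \<in> V \<Longrightarrow> 0 \<le> seminorm f"
  by (simp add: seminorm_def nonneg)

lemma seminorm_square: "f \<in> V \<Longrightarrow> (seminorm f)\<^sup>2 = Re (B f f)"
  by (simp add: seminorm_def nonneg)

lemma seminorm_triangle:
  assumes "f \<in> V" "g \<in> V"
  shows "seminorm (\<lambda>x. f x + g x) \<le> seminorm f + seminorm g"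
proof -
  have "(cmod (B f g))\<^sup>2 \<le> (seminorm f * seminorm g)\<^sup>2"
    using Cauchy_Schwarz[OF assms] by (simp add: power_mult_distrib seminorm_square assms)
  then have "cmod (B f g) \<le> seminorm f * seminorm g"
    by (rule power2_le_imp_le) (simp add: seminorm_nonneg assms)
  then have "Re (B f g) \<le> seminorm f * seminorm g"
    using complex_Re_le_cmod order_trans by blast
  then have "Re (B (\<lambda>x. f x + g x) (\<lambda>x. f x + g x)) \<le> (seminorm f + seminorm g)\<^sup>2"
    using Re_self_lincomb[OF assms, of 1] seminorm_square[OF assms(1)] seminorm_square[OF assms(2)]
    by (simp add: power2_sum)
  then show ?thesis
    unfolding seminorm_def[of "\<lambda>x. f x + g x"]
    by (rule real_le_lsqrt[rotated]) (simp add: seminorm_nonneg assms)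
qed

lemma seminorm_mult:
  assumes "f \<in> V"
  shows "seminorm (\<lambda>x. c * f x) = cmod c * seminorm f"
proof -
  have "B (\<lambda>x. c * f x) (\<lambda>x. c * f x) = c * cnj (B (\<lambda>x. c * f x) f)"
    using assms mult_closed by (simp add: mult_left hermitian[of f "\<lambda>x. c * f x"])
  also have "\<dots> = c * cnj (c * B f f)"
    using assms by (simp add: mult_left)
  finally have "B (\<lambda>x. c * f x) (\<lambda>x. c * f x) = c * cnj (c * B f f)" .
  also have "\<dots> = complex_of_real ((cmod c)\<^sup>2) * cnj (B f f)"
    by (simp only: complex_norm_square complex_cnj_mult mult.assoc)
  finally have "Re (B (\<lambda>x. c * f x) (\<lambda>x. c * f x)) = (cmod c)\<^sup>2 * Re (B f f)"
    by simp
  then show ?thesis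
    by (simp add: seminorm_def real_sqrt_mult)
qed

end

interpretation L2_inner: positive_hermitian_form "L2 M" "l2_inner M" for M
proof
  fix f g h c
  assume f: "f \<in> L2 M" and g: "g \<in> L2 M" and h: "h \<in> L2 M"
  show "(\<lambda>x. f x + c * g x) \<in> L2 M"
    using f g by (intro L2_add L2_mult)
  show "l2_inner M (\<lambda>x. f x + g x) h = l2_inner M f h + l2_inner M g h"
    by (rule l2_inner_add_left[OF f g h])
  show "l2_inner M (\<lambda>x. c * f x) h = c * l2_inner M f h"
    by (rule l2_inner_mult_left)
  show "l2_inner M f h = cnj (l2_inner M h f)"
    by (rule l2_inner_commute)
  show "0 \<le> Re (l2_inner M f f)"
    by (simp add: l2_inner_self)
qed

lemma norm_l2_inner_le_l2_norm:
  assumes "f \<in> L2 M" "g \<in> L2 M"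
  shows "cmod (l2_inner M f g) \<le> l2_norm M f * l2_norm M g"
proof (rule power2_le_imp_le)
  show "(cmod (l2_inner M f g))\<^sup>2 \<le> (l2_norm M f * l2_norm M g)\<^sup>2"
    using L2_inner.Cauchy_Schwarz[OF assms] by (simp add: l2_inner_self power_mult_distrib)
qed (simp add: l2_norm_nonneg)

section \<open>Complete normed subspaces of \<open>L\<^sup>2\<close> inside a principal ideal\<close>

locale complete_normed_L2_subspace =
  fixes M :: "'a measure" and V :: "('a \<Rightarrow> complex) set" and N :: "('a \<Rightarrow> complex) \<Rightarrow> real"
  assumes linear_subspace: "linear_subspace_L2 M V"
    and N_triangle: "f \<in> V \<Longrightarrow> g \<in> V \<Longrightarrow> N (\<lambda>x. f x + g x) \<le> N f + N g"
    and N_mult: "f \<in> V \<Longrightarrow> N (\<lambda>x. c * f x) = cmod c * N f"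
    and N_ae_cong: "f \<in> V \<Longrightarrow> g \<in> V \<Longrightarrow> ae_eq M f g \<Longrightarrow> N f = N g"
    and l2_norm_le_N: "f \<in> V \<Longrightarrow> l2_norm M f \<le> N f"
    and N_complete: "(\<forall>n. F n \<in> V) \<Longrightarrow>
      (\<forall>e>0. \<exists>n0. \<forall>m\<ge>n0. \<forall>n\<ge>n0. N (\<lambda>x. F m x - F n x) < e) \<Longrightarrow>
      \<exists>f\<in>V. (\<lambda>n. N (\<lambda>x. F n x - f x)) \<longlonglongrightarrow> 0"
begin

lemma N_nonneg: "f \<in> V \<Longrightarrow> 0 \<le> N f"
  using l2_norm_le_N l2_norm_nonneg order_trans by blast

lemma N_eq_0_imp_AE:
  assumes "f \<in> V" "N f = 0"
  shows "AE x in M. f x = 0"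
proof -
  have "l2_norm M f = 0"
    using l2_norm_le_N[OF assms(1)] assms(2) l2_norm_nonneg[of M f] by simp
  then show ?thesis
    using AE_eq_0_iff_l2_norm_eq_0 assms(1) linear_subspace_L2_subset[OF linear_subspace] by blast
qed

lemma N_minus_commute:
  assumes "f \<in> V" "g \<in> V"
  shows "N (\<lambda>x. f x - g x) = N (\<lambda>x. g x - f x)"
  using N_mult[OF linear_subspace_L2_diff[OF linear_subspace assms(2,1)], of "-1"] by simp

text \<open>The Baire category argument needs a genuine metric, so we pass to one fixed
  representative of every a.e.-class.\<close>

definition representative :: "('a \<Rightarrow> complex) \<Rightarrow> ('a \<Rightarrow> complex)"
  where "representative f = (SOME g. g \<in> V \<and> ae_eq M g f)"

definition representatives :: "('a \<Rightarrow> complex) set"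
  where "representatives = representative ` V"

definition V_dist :: "('a \<Rightarrow> complex) \<Rightarrow> ('a \<Rightarrow> complex) \<Rightarrow> real"
  where "V_dist f g = (if f \<in> V \<and> g \<in> V then N (\<lambda>x. f x - g x) else 0)"

lemma representative: "f \<in> V \<Longrightarrow> representative f \<in> V \<and> ae_eq M (representative f) f"
  unfolding representative_def by (rule someI[of _ f]) (simp add: ae_eq_refl)

lemma representatives_subset: "representatives \<subseteq> V"
  using representative by (auto simp: representatives_def)

lemma representatives_ae_eq_imp_eq:
  assumes "f \<in> representatives" "g \<in> representatives" "ae_eq M f g"
  shows "f = g"
proof -
  obtain f' g' where "f' \<in> V" "f = representative f'" "g' \<in> V" "g = representative g'"
    using assms(1,2) by (auto simp: representatives_def)
  then have "ae_eq M f' g'"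
    using assms(3) representative by (meson ae_eq_sym ae_eq_trans)
  then have "(\<lambda>h. h \<in> V \<and> ae_eq M h f') = (\<lambda>h. h \<in> V \<and> ae_eq M h g')"
    using ae_eq_sym ae_eq_trans by blast
  with \<open>f = _\<close> \<open>g = _\<close> show ?thesis
    by (simp add: representative_def)
qed

lemma Metric_space_representatives: "Metric_space representatives V_dist"
proof
  fix f g h
  show "0 \<le> V_dist f g"
    using N_nonneg linear_subspace_L2_diff[OF linear_subspace] by (simp add: V_dist_def)
  show "V_dist f g = V_dist g f"
    using N_minus_commute by (auto simp: V_dist_def)
  assume f: "f \<in> representatives" and g: "g \<in> representatives"
  then have fg: "f \<in> V" "g \<in> V"
    using representatives_subset by auto
  show "V_dist f g = 0 \<longleftrightarrow> f = g"
  proof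
    assume "V_dist f g = 0"
    then have "N (\<lambda>x. f x - g x) = 0"
      using fg by (simp add: V_dist_def)
    then have "AE x in M. f x - g x = 0"
      by (rule N_eq_0_imp_AE[OF linear_subspace_L2_diff[OF linear_subspace fg]])
    then have "ae_eq M f g"
      by (auto simp: ae_eq_def elim: eventually_mono)
    then show "f = g"
      using representatives_ae_eq_imp_eq[OF f g] by simp
  next
    assume "f = g"
    then show "V_dist f g = 0"
      using fg N_mult[OF linear_subspace_L2_zero[OF linear_subspace], of 0] by (simp add: V_dist_def)
  qed
  assume "h \<in> representatives"
  then have "h \<in> V"
    using representatives_subset by auto
  then show "V_dist f h \<le> V_dist f g + V_dist g h"
    using N_triangle[OF linear_subspace_L2_diff[OF linear_subspace fg] linear_subspace_L2_diff[OF linear_subspace fg(2)]]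
    by (simp add: V_dist_def fg)
qed

lemma mcomplete_representatives: "Metric_space.mcomplete representatives V_dist"
proof -
  interpret Metric_space representatives V_dist
    by (rule Metric_space_representatives)
  show ?thesis
    unfolding mcomplete_def
  proof (intro allI impI)
    fix F assume "MCauchy F"
    then have F: "\<And>n. F n \<in> V" and "\<forall>e>0. \<exists>n0. \<forall>m n. n0 \<le> m \<longrightarrow> n0 \<le> n \<longrightarrow> V_dist (F m) (F n) < e"
      using representatives_subset by (auto simp: MCauchy_def)
    then have "\<forall>e>0. \<exists>n0. \<forall>m\<ge>n0. \<forall>n\<ge>n0. N (\<lambda>x. F m x - F n x) < e"
      by (simp add: V_dist_def)
    then obtain f where f: "f \<in> V" "(\<lambda>n. N (\<lambda>x. F n x - f x)) \<longlonglongrightarrow> 0"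
      using N_complete F by blast
    have "V_dist (F n) (representative f) = N (\<lambda>x. F n x - f x)" for n
    proof -
      have "ae_eq M (\<lambda>x. F n x - representative f x) (\<lambda>x. F n x - f x)"
        using representative[OF f(1)] by (auto simp: ae_eq_def elim: eventually_mono)
      then show ?thesis
        using F f(1) representative[OF f(1)] linear_subspace_L2_diff[OF linear_subspace]
        by (simp add: V_dist_def N_ae_cong)
    qed
    moreover have "\<And>n. F n \<in> representatives"
      using \<open>MCauchy F\<close> by (auto simp: MCauchy_def)
    moreover have "representative f \<in> representatives"
      using f(1) by (simp add: representatives_def)
    ultimately have "limitin mtopology F (representative f) sequentially"
      using order_tendstoD(2)[OF f(2)] by (simp add: limitin_metric)
    then show "\<exists>x. limitin mtopology F x sequentially" by blast
  qed
qed

definition slice :: "('a \<Rightarrow> real) \<Rightarrow> nat \<Rightarrow> ('a \<Rightarrow> complex) set"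
  where "slice u n = {f \<in> representatives. AE x in M. cmod (f x) \<le> real n * u x}"

lemma closedin_slice: "closedin (Metric_space.mtopology representatives V_dist) (slice u n)"
proof -
  interpret Metric_space representatives V_dist
    by (rule Metric_space_representatives)
  show ?thesis
    unfolding metric_closedin_iff_sequentially_closed
  proof (intro conjI allI impI)
    show "slice u n \<subseteq> representatives"
      by (auto simp: slice_def)
    fix F f assume "range F \<subseteq> slice u n \<and> limitin mtopology F f sequentially"
    then have F: "\<And>k. F k \<in> slice u n" and f: "f \<in> representatives"
      and lim: "\<And>e. e > 0 \<Longrightarrow> eventually (\<lambda>k. F k \<in> representatives \<and> V_dist (F k) f < e) sequentially"
      by (auto simp: limitin_metric)
    have FV: "\<And>k. F k \<in> V" and fV: "f \<in> V"
      using F f representatives_subset by (auto simp: slice_def)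
    have dist_lim: "(\<lambda>k. V_dist (F k) f) \<longlonglongrightarrow> 0"
    proof (rule order_tendstoI)
      show "eventually (\<lambda>k. V_dist (F k) f < e) sequentially" if "0 < e" for e
        using lim[OF that] by (rule eventually_mono) simp
      show "eventually (\<lambda>k. e < V_dist (F k) f) sequentially" if "e < 0" for e
        using that N_nonneg FV fV linear_subspace_L2_diff[OF linear_subspace]
        by (intro always_eventually allI) (simp add: V_dist_def less_le_trans)
    qed
    have l2_le_dist: "l2_norm M (\<lambda>x. F k x - f x) \<le> V_dist (F k) f" for k
      using FV fV l2_norm_le_N linear_subspace_L2_diff[OF linear_subspace] by (simp add: V_dist_def)
    have "(\<lambda>k. l2_norm M (\<lambda>x. F k x - f x)) \<longlonglongrightarrow> 0"
      by (rule tendsto_sandwich[where f="\<lambda>_. 0" and h="\<lambda>k. V_dist (F k) f"])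
        (simp_all add: l2_norm_nonneg l2_le_dist dist_lim)
    then obtain r where "AE x in M. (\<lambda>k. F (r k) x) \<longlonglongrightarrow> f x"
      using L2_tendsto_AE_subseq FV fV linear_subspace_L2_subset[OF linear_subspace] by blast
    moreover have "AE x in M. \<forall>k. cmod (F k x) \<le> real n * u x"
      using F by (simp add: AE_all_countable slice_def)
    ultimately have "AE x in M. cmod (f x) \<le> real n * u x"
    proof eventually_elim
      case (elim x)
      then show ?case
        by (intro LIMSEQ_le_const2[OF tendsto_norm[OF elim(1)]]) auto
    qed
    with f show "f \<in> slice u n"
      by (simp add: slice_def)
  qed
qed

lemma Union_slices:
  assumes "V \<subseteq> principal_ideal M u" "AE x in M. 0 \<le> u x"
  shows "(\<Union>n. slice u n) = representatives"
proof (intro equalityI subsetI)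
  fix f assume "f \<in> representatives"
  then obtain c where "AE x in M. cmod (f x) \<le> c * u x"
    using assms(1) representatives_subset by (auto simp: principal_ideal_def)
  from this assms(2) have "AE x in M. cmod (f x) \<le> real (nat \<lceil>c\<rceil>) * u x"
  proof eventually_elim
    case (elim x)
    then show ?case
      by (meson order_trans mult_right_mono real_nat_ceiling_ge)
  qed
  with \<open>f \<in> representatives\<close> show "f \<in> (\<Union>n. slice u n)"
    by (auto simp: slice_def)
qed (auto simp: slice_def)

lemma slice_contains_ball:
  assumes "V \<subseteq> principal_ideal M u" "AE x in M. 0 \<le> u x"
  obtains n f r where "0 < r" "f \<in> slice u n"
    "Metric_space.mball representatives V_dist f r \<subseteq> slice u n"
proof -
  interpret Metric_space representatives V_dist
    by (rule Metric_space_representatives)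
  have "\<exists>n. mtopology interior_of slice u n \<noteq> {}"
  proof (rule ccontr)
    assume "\<not> ?thesis"
    then have nowhere_dense: "closedin mtopology T \<and> mtopology interior_of T = {}"
      if "T \<in> range (slice u)" for T
      using that closedin_slice by auto
    have "mtopology interior_of (\<Union>(range (slice u))) = {}"
      by (rule metric_Baire_category_alt[OF mcomplete_representatives _ nowhere_dense]) simp
    moreover have "representative (\<lambda>x. 0) \<in> representatives"
      using linear_subspace_L2_zero[OF linear_subspace] by (simp add: representatives_def)
    moreover have "mtopology interior_of representatives = representatives"
      using interior_of_topspace[of mtopology] by (simp only: topspace_mtopology)
    ultimately show False
      unfolding Union_slices[OF assms] by blast
  qed
  then obtain n f where f: "f \<in> mtopology interior_of slice u n"
    by blast
  moreover have "openin mtopology (mtopology interior_of slice u n)"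
    by (rule openin_interior_of)
  ultimately obtain r where "0 < r" "mball f r \<subseteq> mtopology interior_of slice u n"
    by (meson openin_mtopology)
  moreover have "f \<in> slice u n"
    using f interior_of_subset[of mtopology "slice u n"] by auto
  ultimately show ?thesis
    using that interior_of_subset[of mtopology "slice u n"] by auto
qed

lemma slice_ball_bound:
  assumes f: "f \<in> slice u n" and ball: "Metric_space.mball representatives V_dist f r \<subseteq> slice u n"
    and h: "h \<in> V" "N h < r"
  shows "AE x in M. cmod (h x) \<le> 2 * real n * u x"
proof -
  interpret Metric_space representatives V_dist
    by (rule Metric_space_representatives)
  have fV: "f \<in> V" and f_bound: "AE x in M. cmod (f x) \<le> real n * u x"
    using f representatives_subset by (auto simp: slice_def)
  define g where "g = representative (\<lambda>x. f x + h x)"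
  have "(\<lambda>x. f x + h x) \<in> V"
    using linear_subspace_L2_add[OF linear_subspace fV h(1)] .
  then have g: "g \<in> representatives" "ae_eq M g (\<lambda>x. f x + h x)"
    using representative by (auto simp: g_def representatives_def)
  then have gV: "g \<in> V"
    using representatives_subset by blast
  have "ae_eq M (\<lambda>x. f x - g x) (\<lambda>x. (-1) * h x)"
    using g(2) by (auto simp: ae_eq_def elim: eventually_mono)
  then have "N (\<lambda>x. f x - g x) = N (\<lambda>x. (-1) * h x)"
    by (rule N_ae_cong[OF linear_subspace_L2_diff[OF linear_subspace fV gV]
          linear_subspace_L2_mult[OF linear_subspace h(1)]])
  then have "V_dist f g = N h"
    using N_mult[OF h(1), of "-1"] fV gV by (simp add: V_dist_def)
  then have "g \<in> mball f r"
    using f g(1) h(2) by (auto simp: slice_def)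
  then have "AE x in M. cmod (g x) \<le> real n * u x"
    using ball by (auto simp: slice_def)
  with f_bound g(2) show ?thesis
    unfolding ae_eq_def
  proof eventually_elim
    case (elim x)
    then have "cmod (h x) \<le> cmod (g x) + cmod (f x)"
      using norm_triangle_ineq4[of "g x" "f x"] by simp
    with elim show ?case
      by simp
  qed
qed

lemma small_imp_bounded:
  assumes "V \<subseteq> principal_ideal M u" "AE x in M. 0 \<le> u x"
  obtains r c where "0 < r" "0 \<le> c" "\<And>h. h \<in> V \<Longrightarrow> N h < r \<Longrightarrow> AE x in M. cmod (h x) \<le> c * u x"
proof -
  obtain n f r where "0 < r" "f \<in> slice u n"
    "Metric_space.mball representatives V_dist f r \<subseteq> slice u n"
    using slice_contains_ball[OF assms] by blast
  with slice_ball_bound show ?thesis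
    by (intro that[of r "2 * real n"]) auto
qed

lemma bounded_on_ball_imp_uniform_bound:
  assumes r: "0 < r" and small: "\<And>h. h \<in> V \<Longrightarrow> N h < r \<Longrightarrow> AE x in M. cmod (h x) \<le> c * u x"
    and f: "f \<in> V"
  shows "AE x in M. cmod (f x) \<le> (2 * c / r) * N f * u x"
proof (cases "N f = 0")
  case True
  then show ?thesis
    using N_eq_0_imp_AE[OF f] by (auto elim: eventually_mono)
next
  case False
  then have "0 < N f"
    using N_nonneg[OF f] by simp
  define s where "s = r / (2 * N f)"
  have "0 < s"
    using r \<open>0 < N f\<close> by (simp add: s_def)
  have "N (\<lambda>x. complex_of_real s * f x) = s * N f"
    using N_mult[OF f, of "complex_of_real s"] \<open>0 < s\<close> by simp
  also have "\<dots> < r"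
    using r \<open>0 < N f\<close> by (simp add: s_def)
  finally have "AE x in M. cmod (complex_of_real s * f x) \<le> c * u x"
    by (intro small linear_subspace_L2_mult[OF linear_subspace f])
  then show ?thesis
  proof eventually_elim
    case (elim x)
    then have "cmod (f x) \<le> c * u x / s"
      using \<open>0 < s\<close> by (simp add: norm_mult field_simps)
    also have "\<dots> = (2 * c / r) * N f * u x"
      using r \<open>0 < N f\<close> by (simp add: s_def field_simps)
    finally show ?case .
  qed
qed

theorem principal_ideal_uniform_bound:
  assumes "V \<subseteq> principal_ideal M u" "AE x in M. 0 \<le> u x"
  shows "\<exists>K\<ge>0. \<forall>f\<in>V. AE x in M. cmod (f x) \<le> K * N f * u x"
proof -
  obtain r c where r: "0 < r" "0 \<le> c"
    and small: "\<And>h. h \<in> V \<Longrightarrow> N h < r \<Longrightarrow> AE x in M. cmod (h x) \<le> c * u x"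
    using small_imp_bounded[OF assms] by blast
  have "0 \<le> 2 * c / r"
    using r by simp
  moreover have "\<forall>f\<in>V. AE x in M. cmod (f x) \<le> (2 * c / r) * N f * u x"
    using bounded_on_ball_imp_uniform_bound[OF r(1) small] by blast
  ultimately show ?thesis
    by blast
qed

end

section \<open>Closed forms\<close>

locale closed_form_space =
  fixes M :: "'a measure" and Da :: "('a \<Rightarrow> complex) set"
    and a :: "('a \<Rightarrow> complex) \<Rightarrow> ('a \<Rightarrow> complex) \<Rightarrow> complex"
  assumes closed: "closed_form M Da a"
begin

lemma form_domain: "linear_subspace_L2 M Da"
  using closed by (simp add: closed_form_def sym_form_def)

lemma form_domain_L2: "f \<in> Da \<Longrightarrow> f \<in> L2 M"
  using linear_subspace_L2_subset[OF form_domain] by blast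

lemma
  assumes "f \<in> Da" "g \<in> Da" "h \<in> Da"
  shows form_add_left: "a (\<lambda>x. f x + g x) h = a f h + a g h"
    and form_mult_left: "a (\<lambda>x. c * f x) h = c * a f h"
    and form_hermitian: "a f h = cnj (a h f)"
    and form_ae_cong: "ae_eq M f g \<Longrightarrow> a f h = a g h"
  using closed assms unfolding closed_form_def sym_form_def by blast+

definition shift :: real
  where "shift = (SOME w. (\<forall>f\<in>Da. - w * (l2_norm M f)\<^sup>2 \<le> Re (a f f)) \<and>
    (\<forall>F. (\<forall>n. F n \<in> Da) \<and> (\<forall>e>0. \<exists>N. \<forall>m\<ge>N. \<forall>n\<ge>N. form_norm M a w (\<lambda>x. F m x - F n x) < e)
      \<longrightarrow> (\<exists>f\<in>Da. (\<lambda>n. form_norm M a w (\<lambda>x. F n x - f x)) \<longlonglongrightarrow> 0)))"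

lemma
  shows shift_lower_bound: "f \<in> Da \<Longrightarrow> - shift * (l2_norm M f)\<^sup>2 \<le> Re (a f f)"
    and shift_complete: "(\<forall>n. F n \<in> Da) \<Longrightarrow>
      (\<forall>e>0. \<exists>N. \<forall>m\<ge>N. \<forall>n\<ge>N. form_norm M a shift (\<lambda>x. F m x - F n x) < e) \<Longrightarrow>
      \<exists>f\<in>Da. (\<lambda>n. form_norm M a shift (\<lambda>x. F n x - f x)) \<longlonglongrightarrow> 0"
proof -
  have "(\<forall>f\<in>Da. - shift * (l2_norm M f)\<^sup>2 \<le> Re (a f f)) \<and>
    (\<forall>F. (\<forall>n. F n \<in> Da) \<and> (\<forall>e>0. \<exists>N. \<forall>m\<ge>N. \<forall>n\<ge>N. form_norm M a shift (\<lambda>x. F m x - F n x) < e)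
      \<longrightarrow> (\<exists>f\<in>Da. (\<lambda>n. form_norm M a shift (\<lambda>x. F n x - f x)) \<longlonglongrightarrow> 0))"
    unfolding shift_def using closed unfolding closed_form_def by (rule someI_ex[OF conjunct2])
  then show "f \<in> Da \<Longrightarrow> - shift * (l2_norm M f)\<^sup>2 \<le> Re (a f f)"
    and "(\<forall>n. F n \<in> Da) \<Longrightarrow>
      (\<forall>e>0. \<exists>N. \<forall>m\<ge>N. \<forall>n\<ge>N. form_norm M a shift (\<lambda>x. F m x - F n x) < e) \<Longrightarrow>
      \<exists>f\<in>Da. (\<lambda>n. form_norm M a shift (\<lambda>x. F n x - f x)) \<longlonglongrightarrow> 0"
    by blast+
qed

definition shifted_form :: "('a \<Rightarrow> complex) \<Rightarrow> ('a \<Rightarrow> complex) \<Rightarrow> complex"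
  where "shifted_form f g = a f g + complex_of_real (shift + 1) * l2_inner M f g"

lemma Re_shifted_form: "Re (shifted_form f f) = Re (a f f) + (shift + 1) * (l2_norm M f)\<^sup>2"
  by (simp add: shifted_form_def l2_inner_self)

lemma l2_norm_square_le_shifted_form: "f \<in> Da \<Longrightarrow> (l2_norm M f)\<^sup>2 \<le> Re (shifted_form f f)"
  using shift_lower_bound[of f] by (simp add: Re_shifted_form algebra_simps)

sublocale shifted: positive_hermitian_form Da shifted_form
proof
  fix f g h c
  assume f: "f \<in> Da" and g: "g \<in> Da" and h: "h \<in> Da"
  show "(\<lambda>x. f x + c * g x) \<in> Da"
    by (rule linear_subspace_L2_lincomb[OF form_domain f g])
  show "shifted_form (\<lambda>x. f x + g x) h = shifted_form f h + shifted_form g h"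
    using form_add_left[OF f g h] l2_inner_add_left[OF form_domain_L2[OF f] form_domain_L2[OF g] form_domain_L2[OF h]]
    by (simp add: shifted_form_def algebra_simps)
  show "shifted_form (\<lambda>x. c * f x) h = c * shifted_form f h"
    using form_mult_left[OF f g h] by (simp add: shifted_form_def l2_inner_mult_left algebra_simps)
  show "shifted_form f h = cnj (shifted_form h f)"
    using form_hermitian[OF f g h] l2_inner_commute[of M h f] by (simp add: shifted_form_def)
  show "0 \<le> Re (shifted_form f f)"
    using l2_norm_square_le_shifted_form[OF f] by (meson order_trans zero_le_power2)
qed

abbreviation norm_a :: "('a \<Rightarrow> complex) \<Rightarrow> real"
  where "norm_a \<equiv> form_norm M a shift"

lemma norm_a_eq_seminorm: "norm_a f = shifted.seminorm f"
  by (simp add: form_norm_def shifted.seminorm_def Re_shifted_form)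

lemma norm_a_square: "f \<in> Da \<Longrightarrow> (norm_a f)\<^sup>2 = Re (a f f) + (shift + 1) * (l2_norm M f)\<^sup>2"
  by (simp add: norm_a_eq_seminorm shifted.seminorm_square Re_shifted_form)

sublocale complete_normed_L2_subspace M Da norm_a
proof
  fix f g c and F :: "nat \<Rightarrow> 'a \<Rightarrow> complex"
  show "linear_subspace_L2 M Da"
    by (rule form_domain)
  assume f: "f \<in> Da"
  show "l2_norm M f \<le> norm_a f"
    using l2_norm_square_le_shifted_form[OF f]
    by (simp add: norm_a_eq_seminorm shifted.seminorm_def real_le_rsqrt)
  show "norm_a (\<lambda>x. c * f x) = cmod c * norm_a f"
    using shifted.seminorm_mult[OF f] by (simp add: norm_a_eq_seminorm)
  assume g: "g \<in> Da"
  show "norm_a (\<lambda>x. f x + g x) \<le> norm_a f + norm_a g"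
    using shifted.seminorm_triangle[OF f g] by (simp add: norm_a_eq_seminorm)
  assume fg: "ae_eq M f g"
  have "a f f = a g f"
    by (rule form_ae_cong[OF f g f fg])
  also have "\<dots> = cnj (a f g)"
    by (rule form_hermitian[OF g f f])
  also have "a f g = a g g"
    by (rule form_ae_cong[OF f g g fg])
  also have "cnj (a g g) = a g g"
    using form_hermitian[OF g g g] by simp
  finally show "norm_a f = norm_a g"
    using l2_norm_ae_cong[OF form_domain_L2[OF f] form_domain_L2[OF g] fg] by (simp add: form_norm_def)
qed (rule shift_complete)

end

section \<open>Resolvents\<close>

locale resolvent_operator =
  fixes M :: "'a measure" and D :: "('a \<Rightarrow> complex) set"
    and A :: "('a \<Rightarrow> complex) \<Rightarrow> ('a \<Rightarrow> complex)" and \<mu> :: real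
  assumes operator: "linear_operator M D A"
    and resolvent_point: "complex_of_real \<mu> \<in> resolvent_set M D A"
begin

abbreviation R :: "('a \<Rightarrow> complex) \<Rightarrow> ('a \<Rightarrow> complex)"
  where "R \<equiv> resolvent M D A (complex_of_real \<mu>)"

lemma
  assumes "f \<in> D"
  shows operator_domain_L2: "f \<in> L2 M"
    and operator_L2: "A f \<in> L2 M"
    and operator_domain_mult: "(\<lambda>x. c * f x) \<in> D"
    and operator_mult: "ae_eq M (A (\<lambda>x. c * f x)) (\<lambda>x. c * A f x)"
  using operator assms unfolding linear_operator_def linear_subspace_L2_def by blast+

lemma
  assumes "f \<in> D" "g \<in> D"
  shows operator_ae_cong: "ae_eq M f g \<Longrightarrow> ae_eq M (A f) (A g)"
    and operator_domain_add: "(\<lambda>x. f x + g x) \<in> D"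
    and operator_add: "ae_eq M (A (\<lambda>x. f x + g x)) (\<lambda>x. A f x + A g x)"
  using operator assms unfolding linear_operator_def linear_subspace_L2_def by blast+

lemma resolvent:
  assumes "g \<in> L2 M"
  shows "R g \<in> D \<and> ae_eq M (\<lambda>x. complex_of_real \<mu> * R g x - A (R g) x) g"
proof -
  have "\<exists>f. f \<in> D \<and> ae_eq M (\<lambda>x. complex_of_real \<mu> * f x - A f x) g"
    using resolvent_point assms by (auto simp: resolvent_set_def)
  then show ?thesis
    unfolding resolvent_def by (rule someI_ex)
qed

lemma resolvent_L2: "g \<in> L2 M \<Longrightarrow> R g \<in> L2 M"
  using resolvent operator_domain_L2 by blast

lemma operator_resolvent:
  assumes "g \<in> L2 M"
  shows "ae_eq M (A (R g)) (\<lambda>x. complex_of_real \<mu> * R g x - g x)"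
  using conjunct2[OF resolvent[OF assms]] unfolding ae_eq_def
proof (rule eventually_mono)
  fix x assume "complex_of_real \<mu> * R g x - A (R g) x = g x"
  from this[symmetric] show "A (R g) x = complex_of_real \<mu> * R g x - g x"
    by simp
qed

lemma l2_norm_le_shifted_operator:
  obtains C where "0 \<le> C" "\<And>f. f \<in> D \<Longrightarrow> l2_norm M f \<le> C * l2_norm M (\<lambda>x. complex_of_real \<mu> * f x - A f x)"
proof -
  obtain C where C: "\<And>f. f \<in> D \<Longrightarrow> l2_norm M f \<le> C * l2_norm M (\<lambda>x. complex_of_real \<mu> * f x - A f x)"
    using resolvent_point by (auto simp: resolvent_set_def)
  have "l2_norm M f \<le> max 0 C * l2_norm M (\<lambda>x. complex_of_real \<mu> * f x - A f x)" if "f \<in> D" for f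
    using C[OF that] l2_norm_nonneg
    by (meson max.cobounded2 mult_right_mono order_trans)
  then show ?thesis
    by (rule that[OF max.cobounded1])
qed

lemma resolvent_bounded:
  obtains C where "0 \<le> C" "\<And>g. g \<in> L2 M \<Longrightarrow> l2_norm M (R g) \<le> C * l2_norm M g"
proof -
  obtain C where C: "0 \<le> C" "\<And>f. f \<in> D \<Longrightarrow> l2_norm M f \<le> C * l2_norm M (\<lambda>x. complex_of_real \<mu> * f x - A f x)"
    using l2_norm_le_shifted_operator by metis
  have "l2_norm M (R g) \<le> C * l2_norm M g" if g: "g \<in> L2 M" for g
  proof -
    have "(\<lambda>x. complex_of_real \<mu> * R g x - A (R g) x) \<in> L2 M"
      using resolvent[OF g] by (intro L2_diff L2_mult operator_domain_L2 operator_L2) auto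
    then have "l2_norm M (\<lambda>x. complex_of_real \<mu> * R g x - A (R g) x) = l2_norm M g"
      using resolvent[OF g] g by (intro l2_norm_ae_cong) auto
    then show ?thesis
      using C(2) resolvent[OF g] by metis
  qed
  with C(1) that show ?thesis by blast
qed

lemma shifted_operator_injective:
  assumes f: "f \<in> D" and zero: "AE x in M. complex_of_real \<mu> * f x - A f x = 0"
  shows "AE x in M. f x = 0"
proof -
  obtain C where C: "\<And>f. f \<in> D \<Longrightarrow> l2_norm M f \<le> C * l2_norm M (\<lambda>x. complex_of_real \<mu> * f x - A f x)"
    using l2_norm_le_shifted_operator by metis
  have "(\<lambda>x. complex_of_real \<mu> * f x - A f x) \<in> L2 M"
    using f by (intro L2_diff L2_mult operator_domain_L2 operator_L2)
  then have "l2_norm M (\<lambda>x. complex_of_real \<mu> * f x - A f x) = 0"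
    using zero AE_eq_0_iff_l2_norm_eq_0 by blast
  then have "l2_norm M f = 0"
    using C[OF f] l2_norm_nonneg[of M f] by simp
  then show ?thesis
    using AE_eq_0_iff_l2_norm_eq_0 operator_domain_L2[OF f] by blast
qed

text \<open>Writing \<open>R g = g\<^sub>1 + i g\<^sub>2\<close> with real \<open>g\<^sub>1, g\<^sub>2 \<in> D\<close>, the imaginary part of
  \<open>(\<mu> - A) R g = g\<close> is \<open>(\<mu> - A) g\<^sub>2 = 0\<close>.\<close>

lemma resolvent_real:
  assumes real: "real_operator M D A" and g: "g \<in> L2 M" "real_fun M g"
  shows "real_fun M (R g)"
proof -
  have RgD: "R g \<in> D"
    using resolvent[OF g(1)] by blast
  obtain g1 g2 where g12: "g1 \<in> D" "g2 \<in> D" "real_fun M g1" "real_fun M g2"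
    and decomp: "ae_eq M (R g) (\<lambda>x. g1 x + \<i> * g2 x)"
    using real RgD unfolding real_operator_def by blast
  have Ag12: "real_fun M (A g1)" "real_fun M (A g2)"
    using real g12 unfolding real_operator_def by blast+
  have ig2: "(\<lambda>x. \<i> * g2 x) \<in> D"
    using operator_domain_mult[OF g12(2)] .
  have "ae_eq M (A (R g)) (A (\<lambda>x. g1 x + \<i> * g2 x))"
    using operator_ae_cong[OF RgD operator_domain_add[OF g12(1) ig2] decomp] .
  moreover have "ae_eq M (A (\<lambda>x. g1 x + \<i> * g2 x)) (\<lambda>x. A g1 x + A (\<lambda>x. \<i> * g2 x) x)"
    using operator_add[OF g12(1) ig2] .
  moreover have "ae_eq M (A (\<lambda>x. \<i> * g2 x)) (\<lambda>x. \<i> * A g2 x)"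
    using operator_mult[OF g12(2)] .
  ultimately have "AE x in M. complex_of_real \<mu> * g2 x - A g2 x = 0"
    using conjunct2[OF resolvent[OF g(1)]] decomp g12(3,4) Ag12 g(2) unfolding ae_eq_def real_fun_def
  proof eventually_elim
    case (elim x)
    then have "Im (complex_of_real \<mu> * (g1 x + \<i> * g2 x) - (A g1 x + \<i> * A g2 x)) = 0"
      by (metis)
    then show ?case
      using elim by (simp add: complex_eq_iff)
  qed
  then have "AE x in M. g2 x = 0"
    by (rule shifted_operator_injective[OF g12(2)])
  with decomp g12(3) show ?thesis
    unfolding ae_eq_def real_fun_def by eventually_elim simp
qed

end

locale form_resolvent = resolvent_operator M D A \<mu> + closed_form_space M Da a
  for M :: "'a measure" and D A \<mu> Da a +
  assumes associated: "associated M D A Da a"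
begin

definition resolvent_a :: "('a \<Rightarrow> complex) \<Rightarrow> ('a \<Rightarrow> complex)"
  where "resolvent_a g = (SOME f. f \<in> Da \<and> ae_eq M f (R g) \<and>
    (\<forall>h\<in>Da. a f h = l2_inner M g h - complex_of_real \<mu> * l2_inner M (R g) h))"

lemma resolvent_a:
  assumes g: "g \<in> L2 M"
  shows "resolvent_a g \<in> Da \<and> ae_eq M (resolvent_a g) (R g) \<and>
    (\<forall>h\<in>Da. a (resolvent_a g) h = l2_inner M g h - complex_of_real \<mu> * l2_inner M (R g) h)"
proof -
  have RgD: "R g \<in> D" and Rg: "R g \<in> L2 M" and ARg: "A (R g) \<in> L2 M"
    using resolvent[OF g] operator_domain_L2 operator_L2 by blast+
  then obtain f where f: "f \<in> Da" "ae_eq M f (R g)" "\<forall>h\<in>Da. a f h = - l2_inner M (A (R g)) h"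
    using associated ae_eq_refl unfolding associated_def by blast
  have "l2_inner M (A (R g)) h = complex_of_real \<mu> * l2_inner M (R g) h - l2_inner M g h"
    if h: "h \<in> L2 M" for h
  proof -
    have "l2_inner M (A (R g)) h = l2_inner M (\<lambda>x. complex_of_real \<mu> * R g x + (-1) * g x) h"
      using operator_resolvent[OF g] ARg Rg g h
      by (intro l2_inner_ae_cong L2_add L2_mult ae_eq_refl) simp_all
    then show ?thesis
      using l2_inner_add_left[OF L2_mult[OF Rg, of "complex_of_real \<mu>"] L2_mult[OF g, of "-1"] h]
      using l2_inner_mult_left[of M "-1" g h] by (simp add: l2_inner_mult_left)
  qed
  with f form_domain_L2 have "\<exists>f. f \<in> Da \<and> ae_eq M f (R g) \<and>
      (\<forall>h\<in>Da. a f h = l2_inner M g h - complex_of_real \<mu> * l2_inner M (R g) h)"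
    by auto
  then show ?thesis
    unfolding resolvent_a_def by (rule someI_ex)
qed

lemma resolvent_a_domain: "g \<in> L2 M \<Longrightarrow> resolvent_a g \<in> Da"
  using resolvent_a by blast

lemma resolvent_a_ae_eq: "g \<in> L2 M \<Longrightarrow> ae_eq M (resolvent_a g) (R g)"
  using resolvent_a by blast

lemma form_resolvent_a:
  assumes "g \<in> L2 M" "h \<in> L2 M"
  shows "a (resolvent_a g) (resolvent_a h) = l2_inner M g (R h) - complex_of_real \<mu> * l2_inner M (R g) (R h)"
proof -
  have "l2_inner M f (resolvent_a h) = l2_inner M f (R h)" if "f \<in> L2 M" for f
    using assms that resolvent_a_ae_eq resolvent_a_domain form_domain_L2 resolvent_L2
    by (intro l2_inner_ae_cong ae_eq_refl) auto
  then show ?thesis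
    using resolvent_a[OF assms(1)] resolvent_a_domain[OF assms(2)] assms resolvent_L2 by simp
qed

lemma resolvent_symmetric:
  assumes g: "g \<in> L2 M" and h: "h \<in> L2 M"
  shows "l2_inner M g (R h) = l2_inner M (R g) h"
proof -
  have "a (resolvent_a g) (resolvent_a h) = cnj (a (resolvent_a h) (resolvent_a g))"
    using form_hermitian resolvent_a_domain g h by blast
  then have "l2_inner M g (R h) - complex_of_real \<mu> * l2_inner M (R g) (R h)
      = l2_inner M (R g) h - complex_of_real \<mu> * l2_inner M (R g) (R h)"
    using l2_inner_commute[of M h "R g"] l2_inner_commute[of M "R h" "R g"]
    by (simp add: form_resolvent_a g h)
  then show ?thesis
    by simp
qed

lemma norm_a_resolvent_square_le:
  assumes g: "g \<in> L2 M"
  shows "(norm_a (resolvent_a g))\<^sup>2 \<le> cmod (l2_inner M g (R g)) + \<bar>shift + 1 - \<mu>\<bar> * (l2_norm M (R g))\<^sup>2"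
proof -
  have "l2_norm M (resolvent_a g) = l2_norm M (R g)"
    using g resolvent_a_ae_eq resolvent_a_domain form_domain_L2 resolvent_L2
    by (intro l2_norm_ae_cong) auto
  then have "(norm_a (resolvent_a g))\<^sup>2
      = Re (l2_inner M g (R g)) + (shift + 1 - \<mu>) * (l2_norm M (R g))\<^sup>2"
    using norm_a_square[OF resolvent_a_domain[OF g]] form_resolvent_a[OF g g]
    by (simp add: l2_inner_self algebra_simps)
  also have "\<dots> \<le> cmod (l2_inner M g (R g)) + \<bar>shift + 1 - \<mu>\<bar> * (l2_norm M (R g))\<^sup>2"
    by (intro add_mono complex_Re_le_cmod mult_right_mono) simp_all
  finally show ?thesis .
qed

end

context form_resolvent
begin

lemma norm_a_resolvent_bounded:
  obtains C where "0 \<le> C" "\<And>g. g \<in> L2 M \<Longrightarrow> norm_a (resolvent_a g) \<le> C * l2_norm M g"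
proof -
  obtain C where C: "0 \<le> C" "\<And>g. g \<in> L2 M \<Longrightarrow> l2_norm M (R g) \<le> C * l2_norm M g"
    using resolvent_bounded by metis
  define c where "c = \<bar>shift + 1 - \<mu>\<bar>"
  have "0 \<le> C + c * C\<^sup>2"
    using C(1) by (simp add: c_def)
  have bound: "norm_a (resolvent_a g) \<le> sqrt (C + c * C\<^sup>2) * l2_norm M g" if g: "g \<in> L2 M" for g
  proof -
    have RgC: "l2_norm M (R g) \<le> C * l2_norm M g"
      by (rule C(2)[OF g])
    have "(norm_a (resolvent_a g))\<^sup>2 \<le> l2_norm M g * l2_norm M (R g) + c * (l2_norm M (R g))\<^sup>2"
      using norm_a_resolvent_square_le[OF g] norm_l2_inner_le_l2_norm[OF g resolvent_L2[OF g]]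
      unfolding c_def by linarith
    also have "\<dots> \<le> l2_norm M g * (C * l2_norm M g) + c * (C * l2_norm M g)\<^sup>2"
      using RgC l2_norm_nonneg[of M "R g"]
      by (intro add_mono mult_left_mono power_mono) (simp_all add: c_def l2_norm_nonneg)
    also have "\<dots> = (sqrt (C + c * C\<^sup>2) * l2_norm M g)\<^sup>2"
      using C(1) by (simp add: c_def power_mult_distrib power2_eq_square algebra_simps)
    finally have "(norm_a (resolvent_a g))\<^sup>2 \<le> (sqrt (C + c * C\<^sup>2) * l2_norm M g)\<^sup>2" .
    moreover have "0 \<le> sqrt (C + c * C\<^sup>2) * l2_norm M g"
      using \<open>0 \<le> C + c * C\<^sup>2\<close> by (simp add: l2_norm_nonneg)
    ultimately show ?thesis
      by (rule power2_le_imp_le)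
  qed
  show ?thesis
    by (rule that[OF _ bound]) (simp add: \<open>0 \<le> C + c * C\<^sup>2\<close>)
qed

end

definition weighted_l1_norm :: "'a measure \<Rightarrow> ('a \<Rightarrow> real) \<Rightarrow> ('a \<Rightarrow> complex) \<Rightarrow> real"
  where "weighted_l1_norm M u g = (LINT x|M. u x * cmod (g x))"

lemma weighted_l1_norm_nonneg:
  "AE x in M. 0 \<le> u x \<Longrightarrow> 0 \<le> weighted_l1_norm M u g"
  unfolding weighted_l1_norm_def by (rule integral_nonneg_AE) (auto elim: eventually_mono)

lemma L2_of_real_measurable:
  assumes "(\<lambda>x. complex_of_real (u x)) \<in> L2 M"
  shows "u \<in> borel_measurable M"
proof -
  have "(\<lambda>x. Re (complex_of_real (u x))) \<in> borel_measurable M"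
    using assms by measurable
  then show ?thesis
    by simp
qed

lemma integrable_weighted_norm:
  assumes u: "(\<lambda>x. complex_of_real (u x)) \<in> L2 M" "AE x in M. 0 \<le> u x" and h: "h \<in> L2 M"
  shows "integrable M (\<lambda>x. u x * cmod (h x))"
proof (rule integrable_cong_AE_imp[OF integrable_norm_mult_L2[OF u(1) h]])
  show "(\<lambda>x. u x * cmod (h x)) \<in> borel_measurable M"
    using L2_of_real_measurable[OF u(1)] h by measurable
  show "AE x in M. cmod (complex_of_real (u x)) * cmod (h x) = u x * cmod (h x)"
    using u(2) by eventually_elim simp
qed

lemma norm_l2_inner_le_weighted_l1_norm:
  assumes u: "(\<lambda>x. complex_of_real (u x)) \<in> L2 M" "AE x in M. 0 \<le> u x"
    and f: "f \<in> L2 M" "AE x in M. cmod (f x) \<le> c * u x" and h: "h \<in> L2 M"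
  shows "cmod (l2_inner M h f) \<le> c * weighted_l1_norm M u h"
proof -
  have "cmod (l2_inner M h f) \<le> (LINT x|M. cmod (h x) * cmod (f x))"
    by (rule norm_l2_inner_le[OF h f(1)])
  also have "\<dots> \<le> (LINT x|M. c * (u x * cmod (h x)))"
  proof (rule integral_mono_AE)
    show "integrable M (\<lambda>x. cmod (h x) * cmod (f x))"
      by (rule integrable_norm_mult_L2[OF h f(1)])
    show "integrable M (\<lambda>x. c * (u x * cmod (h x)))"
      by (intro integrable_mult_right integrable_weighted_norm u h)
    show "AE x in M. cmod (h x) * cmod (f x) \<le> c * (u x * cmod (h x))"
      using f(2)
    proof eventually_elim
      case (elim x)
      then have "cmod (f x) * cmod (h x) \<le> c * u x * cmod (h x)"
        by (rule mult_right_mono) simp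
      then show ?case
        by (simp add: mult_ac)
    qed
  qed
  also have "\<dots> = c * weighted_l1_norm M u h"
    by (simp add: weighted_l1_norm_def)
  finally show ?thesis .
qed

locale principal_form_resolvent = form_resolvent M D A \<mu> Da a
  for M :: "'a measure" and D A \<mu> Da a +
  fixes u :: "'a \<Rightarrow> real"
  assumes u_L2: "(\<lambda>x. complex_of_real (u x)) \<in> L2 M"
    and u_nonneg: "AE x in M. 0 \<le> u x"
    and form_domain_principal: "Da \<subseteq> principal_ideal M u"
begin

lemma resolvent_le_norm_a:
  obtains K where "0 \<le> K"
    "\<And>g. g \<in> L2 M \<Longrightarrow> AE x in M. cmod (R g x) \<le> K * norm_a (resolvent_a g) * u x"
proof -
  obtain K where K: "0 \<le> K" "\<And>f. f \<in> Da \<Longrightarrow> AE x in M. cmod (f x) \<le> K * norm_a f * u x"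
    using principal_ideal_uniform_bound[OF form_domain_principal u_nonneg] by blast
  have bound: "AE x in M. cmod (R g x) \<le> K * norm_a (resolvent_a g) * u x" if g: "g \<in> L2 M" for g
    using K(2)[OF resolvent_a_domain[OF g]] resolvent_a_ae_eq[OF g]
    unfolding ae_eq_def by eventually_elim simp
  show ?thesis
    by (rule that[OF K(1) bound])
qed

text \<open>Duality: \<open>\<parallel>R g\<parallel>\<^sup>2 = \<langle>g, R (R g)\<rangle>\<close> is controlled by the pointwise bound on \<open>R (R g)\<close>.\<close>

lemma resolvent_le_weighted_l1_norm:
  obtains C where "0 \<le> C" "\<And>g. g \<in> L2 M \<Longrightarrow> l2_norm M (R g) \<le> C * weighted_l1_norm M u g"
proof -
  obtain K where K: "0 \<le> K"
    "\<And>g. g \<in> L2 M \<Longrightarrow> AE x in M. cmod (R g x) \<le> K * norm_a (resolvent_a g) * u x"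
    using resolvent_le_norm_a by blast
  obtain C where C: "0 \<le> C" "\<And>g. g \<in> L2 M \<Longrightarrow> norm_a (resolvent_a g) \<le> C * l2_norm M g"
    using norm_a_resolvent_bounded by blast
  have bound: "l2_norm M (R g) \<le> K * C * weighted_l1_norm M u g" if g: "g \<in> L2 M" for g
  proof (rule square_le_affine_imp_le[where \<beta> = 0, simplified])
    have Rg: "R g \<in> L2 M"
      by (rule resolvent_L2[OF g])
    have "(l2_norm M (R g))\<^sup>2 = Re (l2_inner M g (R (R g)))"
      using resolvent_symmetric[OF g Rg] by (simp add: l2_inner_self)
    also have "\<dots> \<le> K * norm_a (resolvent_a (R g)) * weighted_l1_norm M u g"
      using norm_l2_inner_le_weighted_l1_norm[OF u_L2 u_nonneg resolvent_L2[OF Rg] K(2)[OF Rg] g]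
        complex_Re_le_cmod order_trans by blast
    also have "\<dots> \<le> K * (C * l2_norm M (R g)) * weighted_l1_norm M u g"
      using C(2)[OF Rg] K(1) weighted_l1_norm_nonneg[OF u_nonneg]
      by (intro mult_right_mono mult_left_mono) simp_all
    finally show "(l2_norm M (R g))\<^sup>2 \<le> K * C * weighted_l1_norm M u g * l2_norm M (R g)"
      by (simp add: mult_ac)
    show "0 \<le> K * C * weighted_l1_norm M u g"
      using K(1) C(1) weighted_l1_norm_nonneg[OF u_nonneg] by simp
  qed (rule l2_norm_nonneg)
  show ?thesis
    by (rule that[OF _ bound]) (simp add: K(1) C(1))
qed

lemma norm_a_resolvent_le_weighted_l1_norm:
  obtains C where "0 \<le> C" "\<And>g. g \<in> L2 M \<Longrightarrow> norm_a (resolvent_a g) \<le> C * weighted_l1_norm M u g"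
proof -
  obtain K where K: "0 \<le> K"
    "\<And>g. g \<in> L2 M \<Longrightarrow> AE x in M. cmod (R g x) \<le> K * norm_a (resolvent_a g) * u x"
    using resolvent_le_norm_a by blast
  obtain C where C: "0 \<le> C" "\<And>g. g \<in> L2 M \<Longrightarrow> l2_norm M (R g) \<le> C * weighted_l1_norm M u g"
    using resolvent_le_weighted_l1_norm by blast
  define c where "c = \<bar>shift + 1 - \<mu>\<bar>"
  have bound: "norm_a (resolvent_a g) \<le> (K + sqrt c * C) * weighted_l1_norm M u g" if g: "g \<in> L2 M" for g
  proof -
    let ?n = "norm_a (resolvent_a g)" and ?w = "weighted_l1_norm M u g"
    have "cmod (l2_inner M g (R g)) \<le> K * ?n * ?w"
      by (rule norm_l2_inner_le_weighted_l1_norm[OF u_L2 u_nonneg resolvent_L2[OF g] K(2)[OF g] g])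
    moreover have "(l2_norm M (R g))\<^sup>2 \<le> (C * ?w)\<^sup>2"
      using C(2)[OF g] by (rule power_mono) (rule l2_norm_nonneg)
    then have "c * (l2_norm M (R g))\<^sup>2 \<le> c * (C * ?w)\<^sup>2"
      by (rule mult_left_mono) (simp add: c_def)
    ultimately have "?n\<^sup>2 \<le> K * ?n * ?w + c * (C * ?w)\<^sup>2"
      using norm_a_resolvent_square_le[OF g] unfolding c_def by linarith
    also have "\<dots> = (K * ?w) * ?n + (sqrt c * C * ?w)\<^sup>2"
      by (simp add: c_def power_mult_distrib mult_ac)
    finally have "?n\<^sup>2 \<le> (K * ?w) * ?n + (sqrt c * C * ?w)\<^sup>2" .
    then have "?n \<le> K * ?w + sqrt c * C * ?w"
      by (rule square_le_affine_imp_le[OF N_nonneg[OF resolvent_a_domain[OF g]], rotated 2])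
        (use K(1) C(1) weighted_l1_norm_nonneg[OF u_nonneg] in \<open>simp_all add: c_def\<close>)
    then show ?thesis
      by (simp add: algebra_simps)
  qed
  show ?thesis
    by (rule that[OF _ bound]) (use K(1) C(1) in \<open>simp add: c_def\<close>)
qed

lemma resolvent_dominated:
  obtains K where "0 \<le> K" "\<And>g. g \<in> L2 M \<Longrightarrow> AE x in M. cmod (R g x) \<le> K * (weighted_l1_norm M u g * u x)"
proof -
  obtain K where K: "0 \<le> K"
    "\<And>g. g \<in> L2 M \<Longrightarrow> AE x in M. cmod (R g x) \<le> K * norm_a (resolvent_a g) * u x"
    using resolvent_le_norm_a by blast
  obtain C where C: "0 \<le> C" "\<And>g. g \<in> L2 M \<Longrightarrow> norm_a (resolvent_a g) \<le> C * weighted_l1_norm M u g"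
    using norm_a_resolvent_le_weighted_l1_norm by blast
  have bound: "AE x in M. cmod (R g x) \<le> K * C * (weighted_l1_norm M u g * u x)" if g: "g \<in> L2 M" for g
    using K(2)[OF g] u_nonneg
  proof eventually_elim
    case (elim x)
    have "K * norm_a (resolvent_a g) * u x \<le> K * (C * weighted_l1_norm M u g) * u x"
      using C(2)[OF g] K(1) elim(2) by (intro mult_right_mono mult_left_mono) simp_all
    with elim(1) show ?case
      by (simp add: mult_ac)
  qed
  show ?thesis
    by (rule that[OF _ bound]) (simp add: K(1) C(1))
qed

end

section \<open>Domination by \<open>u \<otimes> u\<close>\<close>

lemma rank_one_nonneg_fun:
  assumes u: "(\<lambda>x. complex_of_real (u x)) \<in> L2 M" "AE x in M. 0 \<le> u x"
    and f: "f \<in> L2 M" "nonneg_fun M f"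
  shows "rank_one M u f x = complex_of_real (weighted_l1_norm M u f * u x)"
proof -
  have "(LINT y|M. complex_of_real (u y) * f y) = (LINT y|M. complex_of_real (u y * cmod (f y)))"
  proof (rule integral_cong_AE)
    show "AE y in M. complex_of_real (u y) * f y = complex_of_real (u y * cmod (f y))"
      using f(2) unfolding nonneg_fun_def
    proof eventually_elim
      case (elim y)
      then show ?case
        by (simp add: complex_eq_iff cmod_def)
    qed
    show "(\<lambda>y. complex_of_real (u y) * f y) \<in> borel_measurable M"
      using u(1) f(1) by measurable
    show "(\<lambda>y. complex_of_real (u y * cmod (f y))) \<in> borel_measurable M"
      using L2_of_real_measurable[OF u(1)] f(1) by measurable
  qed
  also have "\<dots> = complex_of_real (weighted_l1_norm M u f)"
    unfolding weighted_l1_norm_def by (rule integral_complex_of_real)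
  finally show ?thesis
    by (simp add: rank_one_def)
qed

lemma dominated_by_rank_one_AE:
  assumes u: "(\<lambda>x. complex_of_real (u x)) \<in> L2 M" "AE x in M. 0 \<le> u x"
    and f: "f \<in> L2 M" "nonneg_fun M f"
    and g: "real_fun M g" "AE x in M. cmod (g x) \<le> K * (weighted_l1_norm M u f * u x)"
  shows "AE x in M. Im (g x) = 0 \<and> \<bar>Re (g x)\<bar> \<le> K * (weighted_l1_norm M u f * u x)
    \<and> 0 \<le> weighted_l1_norm M u f * u x
    \<and> rank_one M u f x = complex_of_real (weighted_l1_norm M u f * u x)"
  using g u(2) unfolding real_fun_def
proof eventually_elim
  case (elim x)
  moreover have "\<bar>Re (g x)\<bar> \<le> K * (weighted_l1_norm M u f * u x)"
    using elim(2) abs_Re_le_cmod[of "g x"] by linarith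
  ultimately show ?case
    using weighted_l1_norm_nonneg[OF u(2), of f] rank_one_nonneg_fun[OF u f] by simp
qed

lemma dominated_by_rank_one:
  assumes u: "(\<lambda>x. complex_of_real (u x)) \<in> L2 M" "AE x in M. 0 \<le> u x" and "0 \<le> K"
    and T: "\<And>f. f \<in> L2 M \<Longrightarrow> nonneg_fun M f \<Longrightarrow>
      real_fun M (T f) \<and> (AE x in M. cmod (T f x) \<le> K * (weighted_l1_norm M u f * u x))"
  shows "op_dom_le M (\<lambda>f x. - rank_one M u f x) T \<and> op_dom_le M T (rank_one M u)"
proof
  show "op_dom_le M (\<lambda>f x. - rank_one M u f x) T"
    unfolding op_dom_le_def
  proof (intro exI[of _ "complex_of_real (K + 1)"] conjI ballI impI)
    show "0 < complex_of_real (K + 1)"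
      using \<open>0 \<le> K\<close> by (simp add: less_complex_def)
    fix f assume f: "f \<in> L2 M" "nonneg_fun M f"
    from dominated_by_rank_one_AE[OF u f conjunct1[OF T[OF f]] conjunct2[OF T[OF f]]]
    show "nonneg_fun M (\<lambda>x. T f x - complex_of_real (K + 1) * - rank_one M u f x)"
      unfolding nonneg_fun_def by eventually_elim (auto simp: abs_le_iff algebra_simps)
  qed
  show "op_dom_le M T (rank_one M u)"
    unfolding op_dom_le_def
  proof (intro exI[of _ "complex_of_real (1 / (K + 1))"] conjI ballI impI)
    show "0 < complex_of_real (1 / (K + 1))"
      using \<open>0 \<le> K\<close> by (simp add: less_complex_def)
    fix f assume f: "f \<in> L2 M" "nonneg_fun M f"
    from dominated_by_rank_one_AE[OF u f conjunct1[OF T[OF f]] conjunct2[OF T[OF f]]]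
    show "nonneg_fun M (\<lambda>x. rank_one M u f x - complex_of_real (1 / (K + 1)) * T f x)"
      unfolding nonneg_fun_def
    proof eventually_elim
      case (elim x)
      then have "Re (T f x) \<le> (K + 1) * (weighted_l1_norm M u f * u x)"
        by (auto simp: abs_le_iff algebra_simps)
      with \<open>0 \<le> K\<close> elim show ?case
        by (simp add: field_simps)
    qed
  qed
qed

theorem proposition4p3:
  fixes M :: "'a measure" and D Da :: "('a \<Rightarrow> complex) set"
    and A :: "('a \<Rightarrow> complex) \<Rightarrow> ('a \<Rightarrow> complex)"
    and a :: "('a \<Rightarrow> complex) \<Rightarrow> ('a \<Rightarrow> complex) \<Rightarrow> complex"
    and u :: "'a \<Rightarrow> real" and \<mu> :: real
  assumes "sigma_finite_measure M"
    and "self_adjoint M D A"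
    and "real_operator M D A"
    and "spectral_bound M D A < \<infinity>"
    and "closed_form M Da a"
    and "associated M D A Da a"
    and "(\<lambda>x. complex_of_real (u x)) \<in> L2 M"
    and "AE x in M. 0 < u x"
    and "Da \<subseteq> principal_ideal M u"
    and "complex_of_real \<mu> \<in> resolvent_set M D A"
  shows "op_dom_le M (\<lambda>f x. - rank_one M u f x) (resolvent M D A (complex_of_real \<mu>))
       \<and> op_dom_le M (resolvent M D A (complex_of_real \<mu>)) (rank_one M u)"
proof -
  have u_nonneg: "AE x in M. 0 \<le> u x"
    using assms(8) by eventually_elim simp
  interpret principal_form_resolvent M D A \<mu> Da a u
    using assms(2,5-7,9,10) u_nonneg
    by unfold_locales (simp_all add: self_adjoint_def)
  obtain K where "0 \<le> K"
    "\<And>g. g \<in> L2 M \<Longrightarrow> AE x in M. cmod (R g x) \<le> K * (weighted_l1_norm M u g * u x)"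
    using resolvent_dominated by blast
  moreover have "real_fun M (R f)" if "f \<in> L2 M" "nonneg_fun M f" for f
    using resolvent_real[OF assms(3) that(1)] that(2)
    unfolding nonneg_fun_def real_fun_def by (auto elim: eventually_mono)
  ultimately show ?thesis
    by (intro dominated_by_rank_one[OF assms(7) u_nonneg]) simp_all
qed

end
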